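(* There exists an integral domain that is an IDF domain but is neither a BFD nor an MCD-finite domain.
   Context: For an integral domain $R$, write $R^*=R\setminus\{0\}$ for its multiplicative monoid and $R^\times$ for its group of units. A nonunit $a\in R^*$ is an atom (irreducible) if $a=uv$ with $u,v\in R^*$ forces $u$ or $v$ to be a unit. $R$ is an IDF domain if every nonzero element of $R$ is divisible by only finitely many atoms up to associates. $R$ is atomic if every nonzero nonunit is a finite product of atoms. $R$ is a BFD if it is atomic and for every nonzero nonunit $b$ the set of lengths $\{\ell : b=a_1\cdots a_\ell \text{ with all } a_i \text{ atoms}\}$ is finite. A common divisor $d$ of a nonempty subset $S\subseteq R^*$ is a maximal common divisor (MCD) of $S$ if the only common divisors of $\{s/d : s\in S\}$ are units; $R$ is MCD-finite if every nonempty finite subset of $R^*$ has only finitely many MCDs up to associates. *)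

theory Defs
  imports "HOL-Algebra.Ring"
begin

definition dvdR :: "('a, 'b) ring_scheme \<Rightarrow> 'a \<Rightarrow> 'a \<Rightarrow> bool" where
  "dvdR R a b \<longleftrightarrow> a \<in> carrier R \<and> b \<in> carrier R \<and> (\<exists>c\<in>carrier R. b = a \<otimes>\<^bsub>R\<^esub> c)"

definition assocR :: "('a, 'b) ring_scheme \<Rightarrow> 'a \<Rightarrow> 'a \<Rightarrow> bool" where
  "assocR R a b \<longleftrightarrow> a \<in> carrier R \<and> b \<in> carrier R \<and> (\<exists>u\<in>Units R. a = u \<otimes>\<^bsub>R\<^esub> b)"

definition atom :: "('a, 'b) ring_scheme \<Rightarrow> 'a \<Rightarrow> bool" where
  "atom R a \<longleftrightarrow> a \<in> carrier R - {\<zero>\<^bsub>R\<^esub>} \<and> a \<notin> Units R \<and>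
     (\<forall>u\<in>carrier R - {\<zero>\<^bsub>R\<^esub>}. \<forall>v\<in>carrier R - {\<zero>\<^bsub>R\<^esub>}.
        a = u \<otimes>\<^bsub>R\<^esub> v \<longrightarrow> u \<in> Units R \<or> v \<in> Units R)"

definition finite_up_to_assoc :: "('a, 'b) ring_scheme \<Rightarrow> 'a set \<Rightarrow> bool" where
  "finite_up_to_assoc R S \<longleftrightarrow> finite ((\<lambda>a. {b. assocR R a b}) ` S)"

definition IDF_domain :: "('a, 'b) ring_scheme \<Rightarrow> bool" where
  "IDF_domain R \<longleftrightarrow> domain R \<and>
     (\<forall>x\<in>carrier R - {\<zero>\<^bsub>R\<^esub>}. finite_up_to_assoc R {a. atom R a \<and> dvdR R a x})"

definition prodl :: "('a, 'b) ring_scheme \<Rightarrow> 'a list \<Rightarrow> 'a" where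
  "prodl R as = foldr (\<lambda>a b. a \<otimes>\<^bsub>R\<^esub> b) as \<one>\<^bsub>R\<^esub>"

definition atomic :: "('a, 'b) ring_scheme \<Rightarrow> bool" where
  "atomic R \<longleftrightarrow> (\<forall>x\<in>carrier R - {\<zero>\<^bsub>R\<^esub>} - Units R.
     \<exists>as. as \<noteq> [] \<and> (\<forall>a\<in>set as. atom R a) \<and> x = prodl R as)"

definition lengths :: "('a, 'b) ring_scheme \<Rightarrow> 'a \<Rightarrow> nat set" where
  "lengths R b = {length as | as. (\<forall>a\<in>set as. atom R a) \<and> b = prodl R as}"

definition BFD :: "('a, 'b) ring_scheme \<Rightarrow> bool" where
  "BFD R \<longleftrightarrow> domain R \<and> atomic R \<and>
     (\<forall>b\<in>carrier R - {\<zero>\<^bsub>R\<^esub>} - Units R. finite (lengths R b))"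

definition MCD :: "('a, 'b) ring_scheme \<Rightarrow> 'a set \<Rightarrow> 'a \<Rightarrow> bool" where
  "MCD R S d \<longleftrightarrow> (\<forall>s\<in>S. dvdR R d s) \<and>
     (\<forall>e\<in>carrier R. (\<forall>s\<in>S. \<forall>c\<in>carrier R. s = d \<otimes>\<^bsub>R\<^esub> c \<longrightarrow> dvdR R e c)
        \<longrightarrow> e \<in> Units R)"

definition MCD_finite :: "('a, 'b) ring_scheme \<Rightarrow> bool" where
  "MCD_finite R \<longleftrightarrow> (\<forall>S. S \<noteq> {} \<and> finite S \<and> S \<subseteq> carrier R - {\<zero>\<^bsub>R\<^esub>} \<longrightarrow>
     finite_up_to_assoc R {d. MCD R S d})"

end

theory Submission
  imports Defs "HOL-Library.Poly_Mapping" "HOL-Library.Product_Lexorder"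
    "HOL-Library.Product_Plus" "HOL-Library.Z2" "HOL-Library.Countable"
begin

text \<open>
  Let M be the submonoid of \<rat>^3 consisting of 0 and the triples (a, b, c) with
  a, b \<ge> 0 and (a, b) \<noteq> (0, 0), and let R = F_2[M]. Since M has no nonzero units,
  comparing lexicographically largest and smallest exponents shows that every divisor of a
  monomial is a monomial; in particular the only unit of R is 1. Since M is 2-divisible and R
  has characteristic 2, every element of R is a square, so R has no atoms at all: it is
  trivially an IDF domain, and it is not atomic, hence not a BFD. Finally, for every k the
  monomial X^(0,1,k) is an MCD of X^(1,1,0) and X^(0,2,0): a common divisor of the cofactors
  X^(1,0,-k) and X^(0,1,-k) is some X^m with m \<in> M lying below both exponents in M, which
  forces m = 0.
\<close>

lemma (in ring) atom_not_square:
  assumes "atom R a" and "y \<in> carrier R"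
  shows "a \<noteq> y \<otimes> y"
proof
  assume a: "a = y \<otimes> y"
  then have "y \<noteq> \<zero>"
    using assms by (auto simp: atom_def)
  then have "y \<in> Units R"
    using assms a by (auto simp: atom_def)
  then have "a \<in> Units R"
    using a by simp
  then show False
    using assms(1) by (simp add: atom_def)
qed

definition antimatter :: "('a, 'b) ring_scheme \<Rightarrow> bool" where
  "antimatter R \<longleftrightarrow> (\<forall>a. \<not> atom R a)"

lemma (in ring) antimatter_if_all_squares:
  assumes "\<And>x. x \<in> carrier R \<Longrightarrow> \<exists>y\<in>carrier R. x = y \<otimes> y"
  shows "antimatter R"
  unfolding antimatter_def
proof (intro allI notI)
  fix a assume a: "atom R a"
  then obtain y where "y \<in> carrier R" "a = y \<otimes> y"
    using assms by (meson DiffD1 atom_def)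
  with a show False
    using atom_not_square by blast
qed

lemma IDF_domain_if_antimatter:
  assumes "domain R" and "antimatter R"
  shows "IDF_domain R"
  using assms by (simp add: IDF_domain_def antimatter_def finite_up_to_assoc_def)

lemma antimatter_not_BFD:
  assumes "antimatter R" and "x \<in> carrier R - {\<zero>\<^bsub>R\<^esub>} - Units R"
  shows "\<not> BFD R"
proof
  assume "BFD R"
  then obtain as where "as \<noteq> []" "\<forall>a\<in>set as. atom R a"
    using assms(2) by (auto simp: BFD_def atomic_def)
  then show False
    using assms(1) by (cases as) (auto simp: antimatter_def)
qed

lemma assocR_trivial_units:
  assumes "monoid R" and "Units R = {\<one>\<^bsub>R\<^esub>}"
  shows "assocR R a b \<longleftrightarrow> a \<in> carrier R \<and> b = a"
  using assms unfolding assocR_def by (auto dest: monoid.l_one)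

lemma finite_up_to_assoc_trivial_units:
  assumes "monoid R" and "Units R = {\<one>\<^bsub>R\<^esub>}" and "X \<subseteq> carrier R"
  shows "finite_up_to_assoc R X \<longleftrightarrow> finite X"
proof -
  have "(\<lambda>a. {b. assocR R a b}) ` X = (\<lambda>a. {a}) ` X"
    using assms by (auto simp: assocR_trivial_units subset_iff intro!: image_cong)
  then show ?thesis
    by (simp add: finite_up_to_assoc_def finite_image_iff)
qed

lemma not_MCD_finite_if_infinite_MCDs:
  assumes "monoid R" and "Units R = {\<one>\<^bsub>R\<^esub>}"
    and "S \<noteq> {}" and "finite S" and "S \<subseteq> carrier R - {\<zero>\<^bsub>R\<^esub>}"
    and "infinite {d. MCD R S d}"
  shows "\<not> MCD_finite R"
proof -
  have "{d. MCD R S d} \<subseteq> carrier R"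
    using assms(3) by (auto simp: MCD_def dvdR_def)
  then show ?thesis
    using assms by (auto simp: MCD_finite_def finite_up_to_assoc_trivial_units)
qed

abbreviation monomial :: "'a \<Rightarrow> 'a \<Rightarrow>\<^sub>0 bit" where
  "monomial m \<equiv> Poly_Mapping.single m 1"

lemma monomial_neq_zero [simp]: "monomial m \<noteq> 0"
  by (metis empty_not_insert keys_single keys_zero one_neq_zero)

lemma monomial_eq_iff [simp]: "monomial a = monomial b \<longleftrightarrow> a = b"
  by (metis keys_single one_neq_zero singleton_inject)

lemma monomial_eq_one_iff [simp]: "monomial m = 1 \<longleftrightarrow> m = 0"
  by (metis monomial_eq_iff single_one)

lemma monomial_mult_monomial [simp]:
  "monomial a * monomial b = monomial (a + b)"
  by (simp add: mult_single)

lemma sum_times_sum_char_2: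
  fixes f :: "'i \<Rightarrow> 'r::comm_semiring_1"
  assumes "\<And>x::'r. x + x = 0"
  shows "(\<Sum>i\<in>I. f i) * (\<Sum>i\<in>I. f i) = (\<Sum>i\<in>I. f i * f i)"
proof (induction I rule: infinite_finite_induct)
  case (insert i I)
  have "(f i + sum f I) * (f i + sum f I) =
      f i * f i + sum f I * sum f I + (f i * sum f I + f i * sum f I)"
    by (simp add: algebra_simps)
  with insert show ?case
    by (simp add: assms)
qed simp_all

lemma poly_mapping_bit_add_self: "(f :: 'a \<Rightarrow>\<^sub>0 bit) + f = 0"
  by (rule poly_mapping_eqI) (simp add: lookup_add)

lemma poly_mapping_bit_eq_sum_monomials:
  "(f :: 'a \<Rightarrow>\<^sub>0 bit) = (\<Sum>m\<in>Poly_Mapping.keys f. monomial m)"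
proof (rule poly_mapping_eqI)
  fix k
  have "Poly_Mapping.lookup (\<Sum>m\<in>Poly_Mapping.keys f. monomial m) k =
      (\<Sum>m\<in>Poly_Mapping.keys f. if m = k then 1 else 0)"
    by (simp add: lookup_sum lookup_single when_def)
  also have "\<dots> = Poly_Mapping.lookup f k"
    by (simp add: in_keys_iff)
  finally show "Poly_Mapping.lookup f k = Poly_Mapping.lookup (\<Sum>m\<in>Poly_Mapping.keys f. monomial m) k" ..
qed

lemma poly_mapping_bit_eqI:
  "Poly_Mapping.keys (f :: 'a \<Rightarrow>\<^sub>0 bit) = Poly_Mapping.keys g \<Longrightarrow> f = g"
  by (metis poly_mapping_bit_eq_sum_monomials)

lemma keys_mult_unique_sum:
  fixes f g :: "'a::comm_monoid_add \<Rightarrow>\<^sub>0 bit"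
  assumes a: "a \<in> Poly_Mapping.keys f" and b: "b \<in> Poly_Mapping.keys g"
    and unique: "\<And>a' b'. a' \<in> Poly_Mapping.keys f \<Longrightarrow> b' \<in> Poly_Mapping.keys g \<Longrightarrow>
      a' + b' = a + b \<Longrightarrow> a' = a \<and> b' = b"
  shows "a + b \<in> Poly_Mapping.keys (f * g)"
proof -
  have "f * g = (\<Sum>x\<in>Poly_Mapping.keys f. monomial x) * (\<Sum>y\<in>Poly_Mapping.keys g. monomial y)"
    by (metis poly_mapping_bit_eq_sum_monomials)
  also have "\<dots> = (\<Sum>x\<in>Poly_Mapping.keys f. \<Sum>y\<in>Poly_Mapping.keys g. monomial (x + y))"
    by (simp add: sum_product mult_single)
  finally have "Poly_Mapping.lookup (f * g) (a + b) =
      (\<Sum>x\<in>Poly_Mapping.keys f. \<Sum>y\<in>Poly_Mapping.keys g. if x + y = a + b then 1 else 0)"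
    by (simp add: lookup_sum lookup_single when_def)
  also have "\<dots> =
      (\<Sum>x\<in>Poly_Mapping.keys f. \<Sum>y\<in>Poly_Mapping.keys g. if x = a \<and> y = b then 1 else 0)"
    by (intro sum.cong refl) (use unique in auto)
  also have "\<dots> = (\<Sum>x\<in>Poly_Mapping.keys f. if x = a then 1 else 0)"
    by (intro sum.cong refl) (use b in auto)
  also have "\<dots> = 1"
    using a by simp
  finally show ?thesis
    by (simp add: in_keys_iff)
qed

lemma Max_keys_mult:
  fixes f g :: "'a::{ordered_cancel_comm_monoid_add, linorder} \<Rightarrow>\<^sub>0 bit"
  assumes "f \<noteq> 0" and "g \<noteq> 0"
  shows "Max (Poly_Mapping.keys f) + Max (Poly_Mapping.keys g) \<in> Poly_Mapping.keys (f * g)"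
proof (rule keys_mult_unique_sum)
  fix a b
  assume "a \<in> Poly_Mapping.keys f" "b \<in> Poly_Mapping.keys g"
    and sum: "a + b = Max (Poly_Mapping.keys f) + Max (Poly_Mapping.keys g)"
  then have "a \<le> Max (Poly_Mapping.keys f)" "b \<le> Max (Poly_Mapping.keys g)"
    by simp_all
  then show "a = Max (Poly_Mapping.keys f) \<and> b = Max (Poly_Mapping.keys g)"
    using sum add_less_le_mono[of a "Max (Poly_Mapping.keys f)" b "Max (Poly_Mapping.keys g)"]
    by (auto simp: order.order_iff_strict)
qed (use assms in simp_all)

lemma Min_keys_mult:
  fixes f g :: "'a::{ordered_cancel_comm_monoid_add, linorder} \<Rightarrow>\<^sub>0 bit"
  assumes "f \<noteq> 0" and "g \<noteq> 0"
  shows "Min (Poly_Mapping.keys f) + Min (Poly_Mapping.keys g) \<in> Poly_Mapping.keys (f * g)"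
proof (rule keys_mult_unique_sum)
  fix a b
  assume "a \<in> Poly_Mapping.keys f" "b \<in> Poly_Mapping.keys g"
    and sum: "a + b = Min (Poly_Mapping.keys f) + Min (Poly_Mapping.keys g)"
  then have "Min (Poly_Mapping.keys f) \<le> a" "Min (Poly_Mapping.keys g) \<le> b"
    by simp_all
  then show "a = Min (Poly_Mapping.keys f) \<and> b = Min (Poly_Mapping.keys g)"
    using sum add_less_le_mono[of "Min (Poly_Mapping.keys f)" a "Min (Poly_Mapping.keys g)" b]
    by (auto simp: order.order_iff_strict)
qed (use assms in simp_all)

lemma monomial_factor:
  fixes f g :: "'a::{ordered_cancel_comm_monoid_add, linorder} \<Rightarrow>\<^sub>0 bit"
  assumes fg: "f * g = monomial m"
  shows "f = monomial (Max (Poly_Mapping.keys f))"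
proof -
  have "f \<noteq> 0" "g \<noteq> 0"
    using fg by auto
  then have "Max (Poly_Mapping.keys f) + Max (Poly_Mapping.keys g) = m"
    and "Min (Poly_Mapping.keys f) + Min (Poly_Mapping.keys g) = m"
    using Max_keys_mult Min_keys_mult fg by fastforce+
  moreover have "Min (Poly_Mapping.keys g) \<le> Max (Poly_Mapping.keys g)"
    using \<open>g \<noteq> 0\<close> by simp
  ultimately have "\<not> Min (Poly_Mapping.keys f) < Max (Poly_Mapping.keys f)"
    using add_less_le_mono by fastforce
  then have "Poly_Mapping.keys f = {Max (Poly_Mapping.keys f)}"
    using \<open>f \<noteq> 0\<close> by (auto intro: order.antisym simp: not_less)
  then show ?thesis
    by (intro poly_mapping_bit_eqI) simp
qed

definition monoid_algebra :: "'a::comm_monoid_add set \<Rightarrow> ('a \<Rightarrow>\<^sub>0 bit) set" where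
  "monoid_algebra M = {f. Poly_Mapping.keys f \<subseteq> M}"

lemma monomial_in_monoid_algebra_iff [simp]: "monomial m \<in> monoid_algebra M \<longleftrightarrow> m \<in> M"
  by (simp add: monoid_algebra_def)

lemma zero_in_monoid_algebra: "0 \<in> monoid_algebra M"
  by (simp add: monoid_algebra_def)

lemma one_in_monoid_algebra: "0 \<in> M \<Longrightarrow> 1 \<in> monoid_algebra M"
  by (simp add: monoid_algebra_def)

lemma add_in_monoid_algebra:
  "f \<in> monoid_algebra M \<Longrightarrow> g \<in> monoid_algebra M \<Longrightarrow> f + g \<in> monoid_algebra M"
  unfolding monoid_algebra_def using keys_add[of f g] by blast

lemma uminus_in_monoid_algebra: "f \<in> monoid_algebra M \<Longrightarrow> - f \<in> monoid_algebra M"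
  by (simp add: monoid_algebra_def in_keys_iff subset_iff)

lemma mult_in_monoid_algebra:
  assumes "\<And>a b. a \<in> M \<Longrightarrow> b \<in> M \<Longrightarrow> a + b \<in> M"
  shows "f \<in> monoid_algebra M \<Longrightarrow> g \<in> monoid_algebra M \<Longrightarrow> f * g \<in> monoid_algebra M"
  unfolding monoid_algebra_def using keys_mult[of f g] assms by blast

lemma monoid_algebra_square:
  assumes halve: "\<And>m. m \<in> M \<Longrightarrow> \<exists>h\<in>M. h + h = m" and f: "f \<in> monoid_algebra M"
  shows "\<exists>g\<in>monoid_algebra M. f = g * g"
proof -
  have "\<exists>half. \<forall>m\<in>Poly_Mapping.keys f. half m \<in> M \<and> half m + half m = m"
    using halve f by (intro bchoice) (auto simp: monoid_algebra_def)
  then obtain half where half: "\<forall>m\<in>Poly_Mapping.keys f. half m \<in> M \<and> half m + half m = m"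
    by blast
  define g where "g = (\<Sum>m\<in>Poly_Mapping.keys f. monomial (half m))"
  have "g * g = (\<Sum>m\<in>Poly_Mapping.keys f. monomial (half m) * monomial (half m))"
    unfolding g_def by (rule sum_times_sum_char_2) (simp add: poly_mapping_bit_add_self)
  also have "\<dots> = f"
    using half by (simp add: poly_mapping_bit_eq_sum_monomials[symmetric])
  finally have "f = g * g" ..
  moreover have "g \<in> monoid_algebra M"
    using keys_sum[of "\<lambda>m. monomial (half m)" "Poly_Mapping.keys f"] half
    by (auto simp: g_def monoid_algebra_def)
  ultimately show ?thesis
    by blast
qed

lemma monoid_algebra_divisor_of_monomial:
  fixes M :: "'a::{ordered_cancel_comm_monoid_add, linorder} set"
  assumes "u \<in> monoid_algebra M" and "w \<in> monoid_algebra M" and "u * w = monomial m"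
  obtains a b where "u = monomial a" "w = monomial b" "a \<in> M" "b \<in> M" "a + b = m"
proof -
  obtain a b where "u = monomial a" "w = monomial b"
    using monomial_factor[OF assms(3)] monomial_factor[of w u m] assms(3)
    by (metis mult.commute)
  with assms show ?thesis
    using that by simp
qed

lemma monoid_algebra_units:
  fixes M :: "'a::{ordered_cancel_comm_monoid_add, linorder} set"
  assumes reduced: "\<And>a b. a \<in> M \<Longrightarrow> b \<in> M \<Longrightarrow> a + b = 0 \<Longrightarrow> a = 0"
    and "u \<in> monoid_algebra M" and "w \<in> monoid_algebra M" and "u * w = 1"
  shows "u = 1"
proof -
  have "u * w = monomial 0"
    using assms(4) by simp
  with assms(2,3) obtain a b where "u = monomial a" "a \<in> M" "b \<in> M" "a + b = 0"
    by (rule monoid_algebra_divisor_of_monomial)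
  then show ?thesis
    using reduced by simp
qed

definition transport_ring :: "('a::comm_ring_1 \<Rightarrow> 'c) \<Rightarrow> 'a set \<Rightarrow> 'c ring" where
  "transport_ring enc A =
     \<lparr>carrier = enc ` A,
      mult = (\<lambda>x y. enc (the_inv enc x * the_inv enc y)), one = enc 1,
      zero = enc 0, add = (\<lambda>x y. enc (the_inv enc x + the_inv enc y))\<rparr>"

context
  fixes enc :: "'a::comm_ring_1 \<Rightarrow> 'c" and A :: "'a set"
  assumes inj_enc: "inj enc"
begin

lemma transport_ring_simps [simp]:
  "carrier (transport_ring enc A) = enc ` A"
  "enc x \<otimes>\<^bsub>transport_ring enc A\<^esub> enc y = enc (x * y)"
  "enc x \<oplus>\<^bsub>transport_ring enc A\<^esub> enc y = enc (x + y)"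
  "\<one>\<^bsub>transport_ring enc A\<^esub> = enc 1"
  "\<zero>\<^bsub>transport_ring enc A\<^esub> = enc 0"
  by (simp_all add: transport_ring_def the_inv_f_f[OF inj_enc])

lemma Units_transport_ring:
  "Units (transport_ring enc A) = enc ` {u \<in> A. \<exists>v\<in>A. u * v = 1}"
  by (fastforce simp: Units_def mult.commute inj_eq[OF inj_enc])

lemma dvdR_transport_ring:
  "dvdR (transport_ring enc A) (enc u) (enc v) \<longleftrightarrow> u \<in> A \<and> v \<in> A \<and> (\<exists>w\<in>A. v = u * w)"
  by (auto simp: dvdR_def inj_eq[OF inj_enc])

end

lemma domain_transport_ring:
  fixes A :: "'a::idom set"
  assumes inj_enc: "inj enc" and "0 \<in> A" "1 \<in> A"
    and "\<And>x y. x \<in> A \<Longrightarrow> y \<in> A \<Longrightarrow> x + y \<in> A"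
    and "\<And>x y. x \<in> A \<Longrightarrow> y \<in> A \<Longrightarrow> x * y \<in> A"
    and "\<And>x. x \<in> A \<Longrightarrow> - x \<in> A"
  shows "domain (transport_ring enc A)"
proof (rule domain.intro)
  show "cring (transport_ring enc A)"
  proof (rule cringI)
    show "abelian_group (transport_ring enc A)"
      by (rule abelian_groupI)
        (use assms in \<open>auto simp: inj_eq[OF inj_enc] algebra_simps add_eq_0_iff\<close>)
    show "comm_monoid (transport_ring enc A)"
      by (rule comm_monoidI) (use assms in \<open>auto simp: inj_eq[OF inj_enc] algebra_simps\<close>)
  qed (use assms in \<open>auto simp: inj_eq[OF inj_enc] algebra_simps\<close>)
  show "domain_axioms (transport_ring enc A)"
    by (rule domain_axioms.intro) (use assms in \<open>auto simp: inj_eq[OF inj_enc]\<close>)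
qed

text \<open>
  Together with the lexicographic order, this lets the library's integral-domain instance
  for poly_mapping apply to exponents in \<rat>^3.
\<close>

instance prod :: (ordered_cancel_comm_monoid_add, ordered_cancel_comm_monoid_add)
  ordered_cancel_comm_monoid_add
proof
  fix a b c :: "'a \<times> 'b"
  assume "a \<le> b"
  then show "c + a \<le> c + b"
    by (cases a, cases b, cases c) (auto intro: add_strict_left_mono add_left_mono)
qed

definition cone :: "(rat \<times> rat \<times> rat) set" where
  "cone = insert 0 {(a, b, c). 0 \<le> a \<and> 0 \<le> b \<and> (0 < a \<or> 0 < b)}"

lemma zero_in_cone: "0 \<in> cone"
  by (simp add: cone_def)

lemma add_in_cone: "m \<in> cone \<Longrightarrow> n \<in> cone \<Longrightarrow> m + n \<in> cone"
  by (cases m; cases n) (auto simp: cone_def zero_prod_def)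

lemma cone_reduced: "m \<in> cone \<Longrightarrow> n \<in> cone \<Longrightarrow> m + n = 0 \<Longrightarrow> m = 0"
  by (cases m; cases n) (auto simp: cone_def zero_prod_def)

lemma cone_halvable: "m \<in> cone \<Longrightarrow> \<exists>h\<in>cone. h + h = m"
proof (cases m)
  case (fields a b c)
  assume "m \<in> cone"
  then show ?thesis
    by (intro bexI[of _ "(a / 2, b / 2, c / 2)"]) (auto simp: cone_def zero_prod_def fields)
qed

lemma cone_common_summand:
  assumes "a \<in> cone" "b \<in> cone" "b' \<in> cone"
    and "a + b = (1, 0, c)" and "a + b' = (0, 1, c')"
  shows "a = 0"
  using assms by (cases a; cases b; cases b') (auto simp: cone_def zero_prod_def)

text \<open>
  The theorem asks for a ring whose elements are sets of natural numbers, so F_2[M] is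
  transported along the injection sending f to the set of codes of its support.
\<close>

definition support_code :: "(rat \<times> rat \<times> rat \<Rightarrow>\<^sub>0 bit) \<Rightarrow> nat set" where
  "support_code f = to_nat ` Poly_Mapping.keys f"

lemma inj_support_code: "inj support_code"
proof (rule injI)
  fix f g assume "support_code f = support_code g"
  then show "f = g"
    by (intro poly_mapping_bit_eqI) (simp add: support_code_def inj_image_eq_iff[OF inj_to_nat])
qed

lemma support_code_eq_iff [simp]: "support_code f = support_code g \<longleftrightarrow> f = g"
  by (rule inj_eq[OF inj_support_code])

definition cone_ring :: "nat set ring" where
  "cone_ring = transport_ring support_code (monoid_algebra cone)"

lemmas cone_ring_simps [simp] =
  transport_ring_simps[OF inj_support_code, of "monoid_algebra cone", folded cone_ring_def]

lemma domain_cone_ring: "domain cone_ring"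
  unfolding cone_ring_def
  by (rule domain_transport_ring)
    (simp_all add: inj_support_code zero_in_monoid_algebra one_in_monoid_algebra zero_in_cone
      add_in_monoid_algebra mult_in_monoid_algebra add_in_cone uminus_in_monoid_algebra)

lemma ring_cone_ring: "ring cone_ring"
  using domain_cone_ring by (simp add: domain_def cring_def)

lemma Units_cone_ring: "Units cone_ring = {\<one>\<^bsub>cone_ring\<^esub>}"
proof -
  have "{u \<in> monoid_algebra cone. \<exists>v\<in>monoid_algebra cone. u * v = 1} = {1}"
    using monoid_algebra_units[of cone, OF cone_reduced] one_in_monoid_algebra[OF zero_in_cone]
    by auto
  then show ?thesis
    by (simp add: cone_ring_def Units_transport_ring[OF inj_support_code]
      transport_ring_simps[OF inj_support_code])
qed

lemma antimatter_cone_ring: "antimatter cone_ring"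
proof (rule ring.antimatter_if_all_squares)
  show "ring cone_ring"
    by (rule ring_cone_ring)
  fix x assume "x \<in> carrier cone_ring"
  then obtain f where "f \<in> monoid_algebra cone" "x = support_code f"
    by auto
  then show "\<exists>y\<in>carrier cone_ring. x = y \<otimes>\<^bsub>cone_ring\<^esub> y"
    using monoid_algebra_square[OF cone_halvable] by force
qed

lemma monoid_algebra_cone_common_divisor:
  assumes "u \<in> monoid_algebra cone" "w \<in> monoid_algebra cone" "w' \<in> monoid_algebra cone"
    and "u * w = monomial (1, 0, c)" and "u * w' = monomial (0, 1, c')"
  shows "u = 1"
proof -
  obtain a b where a: "u = monomial a" "a \<in> cone" and b: "b \<in> cone" "a + b = (1, 0, c)"
    using assms(1,2,4) by (rule monoid_algebra_divisor_of_monomial)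
  obtain a' b' where a': "u = monomial a'" and b': "b' \<in> cone" "a' + b' = (0, 1, c')"
    using assms(1,3,5) by (rule monoid_algebra_divisor_of_monomial)
  have "a = 0"
    using a a' b b' by (intro cone_common_summand[of a b b']) simp_all
  then show ?thesis
    using a by simp
qed

lemma MCD_cone_ring:
  "MCD cone_ring {support_code (monomial (1, 1, 0)), support_code (monomial (0, 2, 0))}
     (support_code (monomial (0, 1, of_nat k)))"
  (is "MCD _ ?S ?d")
proof -
  let ?c1 = "support_code (monomial (1, 0, - of_nat k))"
  let ?c2 = "support_code (monomial (0, 1, - of_nat k))"
  have factorizations:
    "support_code (monomial (1, 1, 0)) = ?d \<otimes>\<^bsub>cone_ring\<^esub> ?c1"
    "support_code (monomial (0, 2, 0)) = ?d \<otimes>\<^bsub>cone_ring\<^esub> ?c2"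
    by simp_all
  have in_carrier: "?S \<subseteq> carrier cone_ring" "?d \<in> carrier cone_ring"
    "?c1 \<in> carrier cone_ring" "?c2 \<in> carrier cone_ring"
    by (simp_all add: cone_def)
  show ?thesis
    unfolding MCD_def
  proof (intro conjI ballI impI)
    fix s assume "s \<in> ?S"
    then show "dvdR cone_ring ?d s"
      unfolding dvdR_def using factorizations in_carrier by blast
  next
    fix e assume "e \<in> carrier cone_ring"
      and common: "\<forall>s\<in>?S. \<forall>c\<in>carrier cone_ring. s = ?d \<otimes>\<^bsub>cone_ring\<^esub> c \<longrightarrow> dvdR cone_ring e c"
    then obtain u where u: "u \<in> monoid_algebra cone" "e = support_code u"
      by auto
    have "dvdR cone_ring e ?c1"
      using common factorizations(1) in_carrier(3) by blast
    moreover have "dvdR cone_ring e ?c2"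
      using common factorizations(2) in_carrier(4) by blast
    ultimately obtain w w' where "w \<in> monoid_algebra cone" "w' \<in> monoid_algebra cone"
        "u * w = monomial (1, 0, - of_nat k)" "u * w' = monomial (0, 1, - of_nat k)"
      by (auto simp: u cone_ring_def dvdR_transport_ring[OF inj_support_code])
    then have "u = 1"
      by (rule monoid_algebra_cone_common_divisor[OF u(1)])
    then show "e \<in> Units cone_ring"
      using u(2) by (simp add: Units_cone_ring)
  qed
qed

lemma infinite_MCDs_cone_ring:
  "infinite
    {d. MCD cone_ring {support_code (monomial (1, 1, 0)), support_code (monomial (0, 2, 0))} d}"
  (is "infinite ?MCDs")
proof -
  let ?d = "\<lambda>k::nat. support_code (monomial (0, 1, of_nat k))"
  have "inj ?d"
    by (rule injI) simp
  then have "infinite (range ?d)"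
    using finite_imageD infinite_UNIV_nat by blast
  moreover have "range ?d \<subseteq> ?MCDs"
    using MCD_cone_ring by auto
  ultimately show ?thesis
    using infinite_super by blast
qed

theorem mainTheorem1:
  shows "\<exists>R :: nat set ring. domain R \<and> IDF_domain R \<and> \<not> BFD R \<and> \<not> MCD_finite R"
proof (intro exI conjI)
  show "domain cone_ring"
    by (rule domain_cone_ring)
  show "IDF_domain cone_ring"
    using domain_cone_ring antimatter_cone_ring by (rule IDF_domain_if_antimatter)
  have "support_code (monomial (1, 0, 0)) \<in> carrier cone_ring - {\<zero>\<^bsub>cone_ring\<^esub>} - Units cone_ring"
    by (simp add: Units_cone_ring cone_def zero_prod_def)
  with antimatter_cone_ring show "\<not> BFD cone_ring"
    by (rule antimatter_not_BFD)
  show "\<not> MCD_finite cone_ring"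
    by (rule not_MCD_finite_if_infinite_MCDs[OF ring.is_monoid[OF ring_cone_ring]
          Units_cone_ring _ _ _ infinite_MCDs_cone_ring]) (simp_all add: cone_def)
qed

end
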